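(* Let $r \ge 3$, $1 \le k \le r-1$ and $p \ge 1$ be integers. There exists $n_0 = n_0(r,k,p)$ such that for all $n \ge n_0$: if $\mathcal{G}$ is an $r$-uniform $n$-vertex hypergraph with \[ |E(\mathcal{G})| \ge 2 r^{r-k} f(r, p r^{r-k}) \binom{n-k-1}{r-k-1}, \] then $\mathcal{G}$ contains a sunflower with $p$ petals whose core has size at most $k$.
   Context: A sunflower with $p$ petals is a collection of $p$ distinct sets $h_1,\dots,h_p$ (here hyperedges of $\mathcal{G}$) together with a set $Y$ (the core) such that $Y \subseteq h_i$ for all $i$ and $h_i \cap h_j = Y$ for all $i \ne j$; the petals are the sets $h_i \setminus Y$. For integers $r,p \ge 1$, $f(r,p)$ denotes the minimum integer such that every $r$-uniform hypergraph with at least $f(r,p)$ hyperedges contains a sunflower with $p$ petals (this is finite by the Erdős–Rado Sunflower Lemma). *)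

theory Defs
  imports Main
begin

definition sunflower :: "'a set set \<Rightarrow> 'a set set \<Rightarrow> 'a set \<Rightarrow> bool" where
  "sunflower G S Y \<longleftrightarrow> S \<subseteq> G \<and> (\<forall>h\<in>S. Y \<subseteq> h) \<and>
     (\<forall>h\<in>S. \<forall>h'\<in>S. h \<noteq> h' \<longrightarrow> h \<inter> h' = Y)"

definition has_sunflower :: "'a set set \<Rightarrow> nat \<Rightarrow> bool" where
  "has_sunflower G p \<longleftrightarrow> (\<exists>S Y. sunflower G S Y \<and> finite S \<and> card S = p)"

definition uniform :: "nat \<Rightarrow> 'a set set \<Rightarrow> bool" where
  "uniform r G \<longleftrightarrow> (\<forall>e\<in>G. finite e \<and> card e = r)"

text \<open>f(r,p): least m such that every (finite) r-uniform hypergraph with at least m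
  hyperedges contains a sunflower with p petals (vertices taken from nat, w.l.o.g.).\<close>
definition sunflower_num :: "nat \<Rightarrow> nat \<Rightarrow> nat" where
  "sunflower_num r p = (LEAST m. \<forall>G :: nat set set.
     finite G \<and> uniform r G \<and> card G \<ge> m \<longrightarrow> has_sunflower G p)"

end

theory Submission
  imports Defs
begin

text \<open>
  Suppose \<open>G\<close> has no sunflower with \<open>p\<close> petals and a core of size at most \<open>k\<close>. Call \<open>Y\<close>
  a rich core if it is the core of a sunflower of \<open>p r^(|Y| - k)\<close> edges; then \<open>k < |Y| < r\<close>.
  The edges containing no rich core have no sunflower with \<open>p r^(r - k)\<close> petals, since its
  core would be rich, so there are fewer than \<open>f(r, p r^(r - k))\<close> of them. Every other edge
  contains a minimal rich core. For each size \<open>s\<close> there are fewer than \<open>f(r, p r^(r - k))\<close>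
  minimal rich cores of size \<open>s\<close>: a sunflower of \<open>p r^(s - 1 - k)\<close> of them has a core \<open>Z\<close>,
  and because each of its members carries a sunflower of \<open>r\<close> times as many edges, one edge
  per member can be chosen with pairwise disjoint petals, making \<open>Z\<close> a smaller rich core.
  A set of size \<open>s > k\<close> lies in at most \<open>C(n-k-1, r-k-1)\<close> edges, and summing over
  \<open>k < s < r\<close> gives \<open>|G| < (r - k) f(r, p r^(r - k)) C(n-k-1, r-k-1)\<close>.
\<close>

lemma sunflower_subset: "sunflower G S Y \<Longrightarrow> S' \<subseteq> S \<Longrightarrow> sunflower G S' Y"
  unfolding sunflower_def by (meson subset_iff)

lemma sunflower_mono: "sunflower G S Y \<Longrightarrow> G \<subseteq> G' \<Longrightarrow> sunflower G' S Y"
  unfolding sunflower_def by auto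

lemma has_sunflower_mono: "has_sunflower G q \<Longrightarrow> G \<subseteq> G' \<Longrightarrow> has_sunflower G' q"
  unfolding has_sunflower_def by (metis sunflower_mono)

lemma sunflower_empty_core_iff: "sunflower G S {} \<longleftrightarrow> S \<subseteq> G \<and> pairwise disjnt S"
  unfolding sunflower_def pairwise_def disjnt_def by auto

lemma sunflower_obtain_card:
  assumes "sunflower G S Y" "finite S" "c \<le> card S"
  obtains S' where "sunflower G S' Y" "finite S'" "card S' = c"
proof -
  obtain S' where "S' \<subseteq> S" "card S' = c" "finite S'"
    using obtain_subset_with_card_n[OF \<open>c \<le> card S\<close>] by metis
  with \<open>sunflower G S Y\<close> show thesis
    using sunflower_subset that by metis
qed

lemma sunflower_core_psubset:
  assumes sf: "sunflower G S Y" and "uniform r G" "finite S" "2 \<le> card S"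
  obtains h where "h \<in> S" "Y \<subset> h" "finite h" "card h = r"
proof -
  obtain h h' where hh': "h \<in> S" "h' \<in> S" "h \<noteq> h'"
    using \<open>finite S\<close> \<open>2 \<le> card S\<close>
    by (metis One_nat_def card_le_Suc0_iff_eq not_less_eq_eq numeral_2_eq_2)
  have fin: "finite h" "card h = r" "finite h'" "card h' = r"
    using hh' sf \<open>uniform r G\<close> unfolding sunflower_def uniform_def by auto
  have "h \<inter> h' = Y"
    using sf hh' unfolding sunflower_def by simp
  moreover have "\<not> h \<subseteq> h'"
    using fin hh'(3) card_subset_eq by metis
  ultimately have "Y \<subset> h" by auto
  with hh' fin show thesis by (intro that)
qed

lemma sunflower_core_card_less:
  assumes "sunflower G S Y" "uniform r G" "finite S" "2 \<le> card S"
  shows "card Y < r"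
proof -
  obtain h where "Y \<subset> h" "finite h" "card h = r"
    using sunflower_core_psubset[OF assms] by metis
  then show ?thesis
    using psubset_card_mono[of h Y] by simp
qed

text \<open>A sunflower survives any change of encoding that can be undone by a map commuting with
  intersections: removing a common vertex, injective renaming, and padding with fresh vertices.\<close>
lemma has_sunflower_decode:
  assumes dec: "\<And>A. A \<in> H \<Longrightarrow> dec (\<phi> A) = A" and dec_Int: "\<And>X Z. dec (X \<inter> Z) = dec X \<inter> dec Z"
    and "has_sunflower (\<phi> ` H) q"
  shows "has_sunflower H q"
proof -
  obtain S' Y' where sf: "sunflower (\<phi> ` H) S' Y'" and "finite S'" "card S' = q"
    using assms(3) unfolding has_sunflower_def by metis
  define S where "S = {A\<in>H. \<phi> A \<in> S'}"
  have inj: "inj_on \<phi> H"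
    by (metis dec inj_onI)
  have "S' \<subseteq> \<phi> ` H"
    using sf unfolding sunflower_def by simp
  then have "\<phi> ` S = S'"
    unfolding S_def by auto
  moreover have "inj_on \<phi> S"
    using inj by (rule inj_on_subset) (simp add: S_def)
  ultimately have "finite S" "card S = q"
    using \<open>finite S'\<close> \<open>card S' = q\<close> by (metis finite_image_iff, metis card_image)
  have mono: "X \<subseteq> Z \<Longrightarrow> dec X \<subseteq> dec Z" for X Z
    by (metis dec_Int inf.absorb_iff1)
  have "sunflower H S (dec Y')"
    unfolding sunflower_def
  proof (intro conjI ballI impI)
    show "S \<subseteq> H" unfolding S_def by simp
  next
    fix A assume "A \<in> S"
    then have "Y' \<subseteq> \<phi> A" "A \<in> H"
      using sf unfolding S_def sunflower_def by auto
    then show "dec Y' \<subseteq> A"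
      using mono[of Y' "\<phi> A"] dec by simp
  next
    fix A B assume "A \<in> S" "B \<in> S" "A \<noteq> B"
    then have "A \<in> H" "B \<in> H" "\<phi> A \<in> S'" "\<phi> B \<in> S'"
      unfolding S_def by auto
    moreover have "\<phi> A \<noteq> \<phi> B"
      using \<open>A \<noteq> B\<close> dec \<open>A \<in> H\<close> \<open>B \<in> H\<close> by metis
    ultimately have "\<phi> A \<inter> \<phi> B = Y'"
      using sf unfolding sunflower_def by simp
    with \<open>A \<in> H\<close> \<open>B \<in> H\<close> show "A \<inter> B = dec Y'"
      using dec dec_Int by metis
  qed
  with \<open>finite S\<close> \<open>card S = q\<close> show ?thesis
    unfolding has_sunflower_def by metis
qed

lemma has_sunflower_inj_image:
  assumes "inj_on h (\<Union>G)" and "has_sunflower ((`) h ` G) q"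
  shows "has_sunflower G q"
proof (rule has_sunflower_decode[where dec = "\<lambda>X. \<Union>G \<inter> h -` X"])
  fix A assume "A \<in> G"
  then show "\<Union>G \<inter> h -` h ` A = A"
    using \<open>inj_on h (\<Union>G)\<close> by (auto simp: inj_on_def)
qed (use assms in auto)

lemma has_sunflower_link:
  assumes "has_sunflower ((\<lambda>e. e - {x}) ` {e\<in>G. x \<in> e}) q"
  shows "has_sunflower G q"
proof -
  have "has_sunflower {e\<in>G. x \<in> e} q"
    by (rule has_sunflower_decode[where dec = "insert x"]) (use assms in auto)
  then show ?thesis
    by (rule has_sunflower_mono) simp
qed

section \<open>The Erdos--Rado bound\<close>

lemma disjoint_subfamily_or_hitting_set:
  assumes "finite G" "uniform r G"
  shows "(\<exists>D\<subseteq>G. pairwise disjnt D \<and> q \<le> card D) \<or>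
    (\<exists>U. finite U \<and> card U \<le> q * r \<and> (\<forall>e\<in>G. e \<noteq> {} \<longrightarrow> \<not> disjnt e U))"
proof -
  define C where "C = {D. D \<subseteq> G \<and> pairwise disjnt D}"
  have "finite C"
    using \<open>finite G\<close> unfolding C_def by simp
  moreover have "{} \<in> C"
    unfolding C_def by simp
  ultimately have "Max (card ` C) \<in> card ` C"
    by (intro Max_in) auto
  then obtain D where "D \<in> C" "card D = Max (card ` C)"
    by auto
  with \<open>finite C\<close> have D_max: "card D' \<le> card D" if "D' \<in> C" for D'
    using that by simp
  from \<open>D \<in> C\<close> have "D \<subseteq> G" "pairwise disjnt D" "finite D"
    unfolding C_def using \<open>finite G\<close> finite_subset by auto
  show ?thesis
  proof (cases "q \<le> card D")
    case True
    with \<open>D \<subseteq> G\<close> \<open>pairwise disjnt D\<close> show ?thesis by blast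
  next
    case False
    have fin_edges: "finite e" "card e = r" if "e \<in> D" for e
      using that \<open>D \<subseteq> G\<close> \<open>uniform r G\<close> unfolding uniform_def by auto
    have "card (\<Union>D) \<le> (\<Sum>e\<in>D. card e)"
      by (rule card_Union_le_sum_card)
    also have "\<dots> = card D * r"
      using fin_edges by simp
    also have "\<dots> \<le> q * r"
      using False by simp
    finally have "card (\<Union>D) \<le> q * r" .
    moreover have "\<not> disjnt e (\<Union>D)" if "e \<in> G" "e \<noteq> {}" for e
    proof
      assume "disjnt e (\<Union>D)"
      then have "e \<notin> D" "insert e D \<in> C"
        using that \<open>D \<subseteq> G\<close> \<open>pairwise disjnt D\<close>
        unfolding C_def disjnt_def pairwise_def by auto
      then show False
        using D_max[of "insert e D"] \<open>finite D\<close> by simp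
    qed
    moreover have "finite (\<Union>D)"
      using \<open>finite D\<close> fin_edges by blast
    ultimately show ?thesis by blast
  qed
qed

text \<open>The induction step: either \<open>q\<close> disjoint edges form a sunflower with empty core, or a
  small set meets every edge and one of its vertices lies in many edges, whose link is
  \<open>r\<close>-uniform.\<close>
lemma has_sunflower_Suc_uniform:
  fixes G :: "'a set set"
  assumes B: "\<And>G :: 'a set set. finite G \<Longrightarrow> uniform r G \<Longrightarrow> B \<le> card G \<Longrightarrow> has_sunflower G q"
    and "finite G" "uniform (Suc r) G" "q * Suc r * B < card G"
  shows "has_sunflower G q"
proof -
  consider D where "D \<subseteq> G" "pairwise disjnt D" "q \<le> card D"
    | U where "finite U" "card U \<le> q * Suc r" "\<forall>e\<in>G. e \<noteq> {} \<longrightarrow> \<not> disjnt e U"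
    using disjoint_subfamily_or_hitting_set[OF \<open>finite G\<close> \<open>uniform (Suc r) G\<close>, of q] by blast
  then show ?thesis
  proof cases
    case 1
    then have "sunflower G D {}" "finite D"
      using sunflower_empty_core_iff finite_subset \<open>finite G\<close> by auto
    then obtain S where "sunflower G S {}" "finite S" "card S = q"
      using sunflower_obtain_card \<open>q \<le> card D\<close> by metis
    then show ?thesis
      unfolding has_sunflower_def by metis
  next
    case 2
    define Gx where "Gx x = {e\<in>G. x \<in> e}" for x
    have "\<exists>x\<in>U. B \<le> card (Gx x)"
    proof (rule ccontr)
      assume "\<not> (\<exists>x\<in>U. B \<le> card (Gx x))"
      then have small: "card (Gx x) \<le> B" if "x \<in> U" for x
        using that by auto
      have "G \<subseteq> (\<Union>x\<in>U. Gx x)"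
      proof
        fix e assume "e \<in> G"
        then have "e \<noteq> {}"
          using \<open>uniform (Suc r) G\<close> unfolding uniform_def by auto
        with \<open>e \<in> G\<close> show "e \<in> (\<Union>x\<in>U. Gx x)"
          using 2 unfolding Gx_def disjnt_def by auto
      qed
      then have "card G \<le> card (\<Union>x\<in>U. Gx x)"
        using \<open>finite G\<close> 2 by (intro card_mono) (auto simp: Gx_def)
      also have "\<dots> \<le> (\<Sum>x\<in>U. card (Gx x))"
        by (rule card_UN_le) (use 2 in simp)
      also have "\<dots> \<le> card U * B"
        using sum_bounded_above[of U "\<lambda>x. card (Gx x)" B] small by simp
      also have "\<dots> \<le> q * Suc r * B"
        using 2 by simp
      finally show False
        using \<open>q * Suc r * B < card G\<close> by simp
    qed
    then obtain x where "B \<le> card (Gx x)"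
      by blast
    have "inj_on (\<lambda>e. e - {x}) (Gx x)"
      unfolding Gx_def by (rule inj_onI) (metis insert_Diff mem_Collect_eq)
    then have "card ((\<lambda>e. e - {x}) ` Gx x) = card (Gx x)"
      by (rule card_image)
    moreover have "uniform r ((\<lambda>e. e - {x}) ` Gx x)"
      using \<open>uniform (Suc r) G\<close> unfolding uniform_def Gx_def by auto
    moreover have "finite (Gx x)"
      using \<open>finite G\<close> unfolding Gx_def by simp
    ultimately have "has_sunflower ((\<lambda>e. e - {x}) ` Gx x) q"
      using B[of "(\<lambda>e. e - {x}) ` Gx x"] \<open>B \<le> card (Gx x)\<close> by simp
    then show ?thesis
      unfolding Gx_def by (rule has_sunflower_link)
  qed
qed

lemma erdos_rado: "\<exists>B. \<forall>G :: 'a set set. finite G \<and> uniform r G \<and> B \<le> card G \<longrightarrow> has_sunflower G q"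
proof (induction r)
  case 0
  have "card G \<le> 1" if "uniform 0 G" for G :: "'a set set"
  proof -
    have "G \<subseteq> {{}}"
      using that unfolding uniform_def by auto
    then show ?thesis
      using card_mono[of "{{}}" G] by simp
  qed
  then show ?case
    by (intro exI[of _ 2]) (meson numeral_le_one_iff order_trans semiring_norm(69))
next
  case (Suc r)
  then obtain B where "\<And>G :: 'a set set. finite G \<Longrightarrow> uniform r G \<Longrightarrow> B \<le> card G \<Longrightarrow> has_sunflower G q"
    by blast
  then have "has_sunflower G q"
    if "finite G" "uniform (Suc r) G" "q * Suc r * B < card G" for G :: "'a set set"
    using has_sunflower_Suc_uniform that by blast
  then show ?case
    by (intro exI[of _ "Suc (q * Suc r * B)"]) (auto simp: Suc_le_eq)
qed

lemma has_sunflower_of_card_ge: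
  assumes "finite G" "uniform r G" "sunflower_num r q \<le> card G"
  shows "has_sunflower G q"
proof -
  have nat_case: "has_sunflower G' q"
    if "finite G'" "uniform r G'" "sunflower_num r q \<le> card G'" for G' :: "nat set set"
  proof -
    let ?P = "\<lambda>m. \<forall>G :: nat set set. finite G \<and> uniform r G \<and> m \<le> card G \<longrightarrow> has_sunflower G q"
    have "?P (sunflower_num r q)"
      unfolding sunflower_num_def by (rule LeastI_ex) (rule erdos_rado)
    with that show ?thesis by blast
  qed
  have "finite (\<Union>G)"
    using assms(1,2) unfolding uniform_def by simp
  then obtain h :: "_ \<Rightarrow> nat" where h: "inj_on h (\<Union>G)"
    using finite_imp_inj_to_nat_seg by metis
  have "inj_on ((`) h) G"
    using h by (rule inj_on_subset[OF inj_on_image]) auto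
  have "has_sunflower ((`) h ` G) q"
  proof (rule nat_case)
    show "finite ((`) h ` G)"
      using assms(1) by simp
    show "uniform r ((`) h ` G)"
      unfolding uniform_def
    proof
      fix e' assume "e' \<in> (`) h ` G"
      then obtain e where "e \<in> G" "e' = h ` e"
        by blast
      moreover have "inj_on h e"
        using inj_on_subset[OF h] \<open>e \<in> G\<close> by blast
      ultimately show "finite e' \<and> card e' = r"
        using assms(2) unfolding uniform_def by (simp add: card_image)
    qed
    show "sunflower_num r q \<le> card ((`) h ` G)"
      using assms(3) card_image[OF \<open>inj_on ((`) h) G\<close>] by simp
  qed
  with h show ?thesis
    by (rule has_sunflower_inj_image)
qed

lemma sunflower_num_pos:
  assumes "1 \<le> q"
  shows "1 \<le> sunflower_num r q"
proof (rule ccontr)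
  assume "\<not> 1 \<le> sunflower_num r q"
  then have "has_sunflower ({} :: nat set set) q"
    using has_sunflower_of_card_ge[of "{}" r q] by (simp add: uniform_def)
  then show False
    using assms unfolding has_sunflower_def sunflower_def by auto
qed

lemma has_sunflower_of_card_ge_uniform_le:
  assumes "finite H" "uniform s H" "s \<le> r" "sunflower_num r q \<le> card H"
  shows "has_sunflower H q"
proof -
  \<comment> \<open>Adding the same \<open>r - s\<close> fresh vertices to every member keeps all intersections.\<close>
  define pad :: "'a set \<Rightarrow> ('a + nat) set" where "pad A = Inl ` A \<union> Inr ` {..<r - s}" for A
  have dec_pad: "Inl -` pad A = A" for A
    unfolding pad_def by auto
  then have "inj_on pad H"
    by (metis inj_onI)
  have "card (pad A) = r" "finite (pad A)" if "A \<in> H" for A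
  proof -
    have "finite A" "card A = s"
      using that assms(2) unfolding uniform_def by auto
    moreover have "card (Inl ` A \<union> Inr ` {..<r - s})
        = card (Inl ` A :: ('a + nat) set) + card (Inr ` {..<r - s} :: ('a + nat) set)"
      using \<open>finite A\<close> by (intro card_Un_disjoint) auto
    ultimately show "finite (pad A)" "card (pad A) = r"
      using \<open>s \<le> r\<close> unfolding pad_def by (auto simp: card_image)
  qed
  then have "uniform r (pad ` H)"
    unfolding uniform_def by blast
  moreover have "sunflower_num r q \<le> card (pad ` H)"
    using assms(4) card_image[OF \<open>inj_on pad H\<close>] by simp
  ultimately have "has_sunflower (pad ` H) q"
    using assms(1) by (intro has_sunflower_of_card_ge) auto
  then show ?thesis
    by (rule has_sunflower_decode[where dec = "vimage Inl", rotated 2]) (auto simp: dec_pad)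
qed

section \<open>Sunflowers of cores\<close>

lemma sunflower_petal_avoiding:
  assumes sf: "sunflower G S Y" and "finite B" "card B < card S"
  obtains h where "h \<in> S" "disjnt (h - Y) B"
proof -
  have "\<exists>h\<in>S. disjnt (h - Y) B"
  proof (rule ccontr)
    assume "\<not> (\<exists>h\<in>S. disjnt (h - Y) B)"
    then obtain g where g: "g h \<in> h - Y" "g h \<in> B" if "h \<in> S" for h
      unfolding disjnt_iff by metis
    have "inj_on g S"
    proof (rule inj_onI)
      fix h h' assume "h \<in> S" "h' \<in> S" "g h = g h'"
      then have "g h \<in> h \<inter> h' - Y"
        using g by (metis DiffD1 DiffD2 Diff_iff Int_iff)
      with \<open>h \<in> S\<close> \<open>h' \<in> S\<close> show "h = h'"
        using sf unfolding sunflower_def by auto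
    qed
    then have "card S \<le> card B"
      using g \<open>finite B\<close> by (intro card_inj_on_le) auto
    with \<open>card B < card S\<close> show False
      by simp
  qed
  with that show thesis
    by blast
qed

definition disjoint_petal_choice ::
    "'a set set \<Rightarrow> 'a set set \<Rightarrow> 'a set \<Rightarrow> ('a set \<Rightarrow> 'a set) \<Rightarrow> bool" where
  "disjoint_petal_choice G T X e \<longleftrightarrow> (\<forall>Y\<in>T. e Y \<in> G \<and> Y \<subseteq> e Y \<and> disjnt (e Y - Y) X \<and>
    (\<forall>Y'\<in>T. Y' \<noteq> Y \<longrightarrow> disjnt (e Y - Y) (e Y')))"

lemma disjoint_petal_choice_insert:
  assumes e: "disjoint_petal_choice G T (X \<union> Y0) e" and "Y0 \<notin> T"
    and "h \<in> G" "Y0 \<subseteq> h" and h: "disjnt (h - Y0) (X \<union> \<Union>(e ` T))"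
  shows "disjoint_petal_choice G (insert Y0 T) X (e(Y0 := h))"
proof -
  have e_h: "disjnt (e Y - Y) h" if "Y \<in> T" for Y
  proof -
    have "disjnt (e Y - Y) Y0"
      using e that unfolding disjoint_petal_choice_def disjnt_iff by auto
    moreover have "disjnt (e Y - Y) (h - Y0)"
      using h that unfolding disjnt_iff by blast
    ultimately show ?thesis
      unfolding disjnt_iff by blast
  qed
  have "disjnt (h - Y0) X"
    using h unfolding disjnt_iff by blast
  moreover have "disjnt (h - Y0) (e Y)" if "Y \<in> T" for Y
    using h that unfolding disjnt_iff by blast
  ultimately show ?thesis
    using e e_h \<open>Y0 \<notin> T\<close> \<open>h \<in> G\<close> \<open>Y0 \<subseteq> h\<close>
    unfolding disjoint_petal_choice_def by (auto simp: disjnt_iff)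
qed

lemma exists_disjoint_petal_choice:
  assumes "uniform r G" "0 < r" "finite T" "finite X"
    and "\<forall>Y\<in>T. \<exists>S. sunflower G S Y \<and> finite S \<and> card X + card T * r \<le> card S"
  shows "\<exists>e. disjoint_petal_choice G T X e"
  using assms(3-5)
proof (induction T arbitrary: X rule: finite_induct)
  case empty
  show ?case
    unfolding disjoint_petal_choice_def by simp
next
  case (insert Y0 T)
  obtain S0 where S0: "sunflower G S0 Y0" "finite S0" "card X + Suc (card T) * r \<le> card S0"
    using insert.prems(2) insert.hyps by auto
  then obtain h0 where "h0 \<in> S0"
    using \<open>0 < r\<close> by fastforce
  then have "Y0 \<subseteq> h0" "finite h0" "card h0 = r"
    using S0(1) \<open>uniform r G\<close> unfolding sunflower_def uniform_def by auto
  then have "finite Y0" "card Y0 \<le> r"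
    using finite_subset card_mono by metis+
  then have "finite (X \<union> Y0)" "card (X \<union> Y0) \<le> card X + r"
    using insert.prems(1) card_Un_le[of X Y0] by auto
  then have "\<forall>Y\<in>T. \<exists>S. sunflower G S Y \<and> finite S \<and> card (X \<union> Y0) + card T * r \<le> card S"
    using insert.prems(2) insert.hyps by fastforce
  then obtain e where e: "disjoint_petal_choice G T (X \<union> Y0) e"
    using insert.IH[OF \<open>finite (X \<union> Y0)\<close>] by blast
  then have edges: "e Y \<in> G" if "Y \<in> T" for Y
    using that unfolding disjoint_petal_choice_def by blast
  define B where "B = X \<union> \<Union>(e ` T)"
  have "card (\<Union>(e ` T)) \<le> (\<Sum>Y\<in>T. card (e Y))"
    using card_UN_le[OF insert.hyps(1)] .
  also have "\<dots> = card T * r"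
    using edges \<open>uniform r G\<close> unfolding uniform_def by simp
  finally have "card B < card S0"
    unfolding B_def using card_Un_le[of X "\<Union>(e ` T)"] S0(3) \<open>0 < r\<close> by simp
  moreover have "finite B"
    unfolding B_def using insert.prems(1) insert.hyps(1) edges \<open>uniform r G\<close>
    unfolding uniform_def by auto
  ultimately obtain h where "h \<in> S0" "disjnt (h - Y0) B"
    using sunflower_petal_avoiding[OF S0(1)] by metis
  moreover have "h \<in> G" "Y0 \<subseteq> h"
    using \<open>h \<in> S0\<close> S0(1) unfolding sunflower_def by auto
  ultimately show ?case
    using disjoint_petal_choice_insert[OF e insert.hyps(2)] unfolding B_def by blast
qed

lemma sunflower_image_disjoint_petal_choice:
  assumes choice: "disjoint_petal_choice G T X e" and sf: "sunflower H T Z"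
  shows "sunflower G (e ` T) Z" "inj_on e T"
proof -
  have e: "\<forall>Y\<in>T. e Y \<in> G \<and> Y \<subseteq> e Y \<and> (\<forall>Y'\<in>T. Y' \<noteq> Y \<longrightarrow> disjnt (e Y - Y) (e Y'))"
    using choice unfolding disjoint_petal_choice_def by blast
  have Z_sub: "Z \<subseteq> Y" if "Y \<in> T" for Y
    using sf that unfolding sunflower_def by simp
  have core: "Y \<inter> Y' = Z" if "Y \<in> T" "Y' \<in> T" "Y \<noteq> Y'" for Y Y'
    using sf that unfolding sunflower_def by simp
  have e_Int: "e Y \<inter> e Y' = Z" if "Y \<in> T" "Y' \<in> T" "Y \<noteq> Y'" for Y Y'
  proof -
    have "e Y \<inter> e Y' \<subseteq> Y \<inter> Y'"
      using e that unfolding disjnt_iff by blast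
    moreover have "Y \<inter> Y' \<subseteq> e Y \<inter> e Y'"
      using e that by blast
    ultimately show ?thesis
      using core[OF that] by blast
  qed
  show "inj_on e T"
  proof (rule inj_onI)
    fix Y Y' assume "Y \<in> T" "Y' \<in> T" "e Y = e Y'"
    show "Y = Y'"
    proof (rule ccontr)
      assume "Y \<noteq> Y'"
      then have "Y \<subseteq> Z" "Y' \<subseteq> Z"
        using e_Int[OF \<open>Y \<in> T\<close> \<open>Y' \<in> T\<close>] e \<open>Y \<in> T\<close> \<open>Y' \<in> T\<close> \<open>e Y = e Y'\<close> by auto
      with core[OF \<open>Y \<in> T\<close> \<open>Y' \<in> T\<close> \<open>Y \<noteq> Y'\<close>] \<open>Y \<noteq> Y'\<close> show False
        by blast
    qed
  qed
  show "sunflower G (e ` T) Z"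
    unfolding sunflower_def
  proof (intro conjI ballI impI)
    show "e ` T \<subseteq> G"
      using e by auto
  next
    fix h assume "h \<in> e ` T"
    then obtain Y where "Y \<in> T" "h = e Y"
      by blast
    then show "Z \<subseteq> h"
      using e Z_sub by blast
  next
    fix h h' assume "h \<in> e ` T" "h' \<in> e ` T" "h \<noteq> h'"
    then show "h \<inter> h' = Z"
      using e_Int by auto
  qed
qed

lemma sunflower_of_cores:
  assumes "uniform r G" "0 < r" "sunflower H T Z" "finite T"
    and "\<forall>Y\<in>T. \<exists>S. sunflower G S Y \<and> finite S \<and> card T * r \<le> card S"
  obtains S where "sunflower G S Z" "finite S" "card S = card T"
proof -
  obtain e where "disjoint_petal_choice G T {} e"
    using exists_disjoint_petal_choice[of r G T "{}"] assms(1,2,4,5) by auto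
  then have "sunflower G (e ` T) Z" "inj_on e T"
    using sunflower_image_disjoint_petal_choice assms(3) by blast+
  with \<open>finite T\<close> show thesis
    using that card_image by blast
qed

section \<open>Counting edges without small-core sunflowers\<close>

lemma choose_le_choose_add: "a choose b \<le> (a + d) choose (b + d)"
proof (induction d)
  case (Suc d)
  then show ?case
    by (simp add: le_add1 order_trans)
qed simp

lemma card_edges_containing_le:
  assumes "finite V" "\<forall>e\<in>G. e \<subseteq> V" "uniform r G" "Y \<subseteq> V"
  shows "card {e\<in>G. Y \<subseteq> e} \<le> (card V - card Y) choose (r - card Y)"
proof -
  have "finite Y"
    using assms(1,4) by (rule finite_subset[rotated])
  let ?T = "{d. d \<subseteq> V - Y \<and> card d = r - card Y}"
  have "inj_on (\<lambda>e. e - Y) {e\<in>G. Y \<subseteq> e}"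
    by (rule inj_onI) (metis Diff_partition mem_Collect_eq)
  moreover have "(\<lambda>e. e - Y) ` {e\<in>G. Y \<subseteq> e} \<subseteq> ?T"
    using assms(2,3) \<open>finite Y\<close> unfolding uniform_def by (auto simp: card_Diff_subset)
  moreover have "finite ?T"
    using assms(1) by simp
  ultimately have "card {e\<in>G. Y \<subseteq> e} \<le> card ?T"
    by (rule card_inj_on_le)
  also have "\<dots> = (card V - card Y) choose (r - card Y)"
    using assms(1,4) \<open>finite Y\<close> by (simp add: n_subsets card_Diff_subset)
  finally show ?thesis .
qed

lemma exists_minimal_subset:
  assumes "finite Y" "P Y"
  obtains Y' where "Y' \<subseteq> Y" "P Y'" "\<And>Z. Z \<subset> Y' \<Longrightarrow> \<not> P Z"
  using assms
proof (induction Y rule: finite_psubset_induct)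
  case (psubset Y)
  show ?case
  proof (cases "\<exists>Z. Z \<subset> Y \<and> P Z")
    case True
    then obtain Z where "Z \<subset> Y" "P Z"
      by blast
    then show ?thesis
      using psubset.IH[of Z] psubset.prems(1) by (meson order.trans psubset_imp_subset)
  next
    case False
    then show ?thesis
      using psubset.prems by blast
  qed
qed

locale small_core_sunflower_free =
  fixes r k p :: nat and V :: "'a set" and G :: "'a set set"
  assumes k_less_r: "k < r" and two_le_p: "2 \<le> p"
    and finite_V: "finite V" and edges_in_V: "\<forall>e\<in>G. e \<subseteq> V" and uniform_G: "uniform r G"
    and large_cores: "\<And>S Y. sunflower G S Y \<Longrightarrow> finite S \<Longrightarrow> card S = p \<Longrightarrow> k < card Y"
begin

definition petals :: "nat \<Rightarrow> nat" where
  "petals t = p * r ^ (t - k)"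

lemma petals_mono: "t \<le> t' \<Longrightarrow> petals t \<le> petals t'"
  unfolding petals_def using k_less_r by (simp add: power_increasing)

lemma p_le_petals: "p \<le> petals t"
  unfolding petals_def using k_less_r by simp

lemma two_le_petals: "2 \<le> petals t"
  using two_le_p p_le_petals order_trans by blast

lemma petals_Suc:
  assumes "k < s"
  shows "petals s = petals (s - 1) * r"
proof -
  have "s - k = Suc (s - 1 - k)"
    using assms by simp
  then show ?thesis
    unfolding petals_def by (simp add: mult.commute mult.left_commute)
qed

definition rich_core :: "'a set \<Rightarrow> bool" where
  "rich_core Y \<longleftrightarrow> (\<exists>S. sunflower G S Y \<and> finite S \<and> petals (card Y) \<le> card S)"

definition minimal_rich_cores :: "nat \<Rightarrow> 'a set set" where
  "minimal_rich_cores s = {Y. rich_core Y \<and> card Y = s \<and> (\<forall>Z. Z \<subset> Y \<longrightarrow> \<not> rich_core Z)}"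

lemma rich_core_card:
  assumes "rich_core Y"
  shows "k < card Y" "card Y < r" "Y \<subseteq> V"
proof -
  obtain S where S: "sunflower G S Y" "finite S" "petals (card Y) \<le> card S"
    using assms unfolding rich_core_def by blast
  then have "2 \<le> card S"
    using two_le_petals order_trans by blast
  then obtain h where "h \<in> S" "Y \<subset> h"
    using sunflower_core_psubset[OF S(1) uniform_G S(2)] by metis
  then show "Y \<subseteq> V"
    using S(1) edges_in_V unfolding sunflower_def by blast
  show "card Y < r"
    using sunflower_core_card_less[OF S(1) uniform_G S(2) \<open>2 \<le> card S\<close>] .
  obtain S' where "sunflower G S' Y" "finite S'" "card S' = p"
    using sunflower_obtain_card[OF S(1,2)] S(3) p_le_petals order_trans by metis
  then show "k < card Y"
    by (rule large_cores)
qed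

lemma finite_G: "finite G"
proof -
  have "G \<subseteq> Pow V"
    using edges_in_V by auto
  then show ?thesis
    using finite_V finite_subset by blast
qed

lemma card_edges_without_rich_core:
  "card {e\<in>G. \<forall>Y\<subseteq>e. \<not> rich_core Y} < sunflower_num r (petals r)"
proof (rule ccontr)
  define G' where "G' = {e\<in>G. \<forall>Y\<subseteq>e. \<not> rich_core Y}"
  assume "\<not> card {e\<in>G. \<forall>Y\<subseteq>e. \<not> rich_core Y} < sunflower_num r (petals r)"
  then have "sunflower_num r (petals r) \<le> card G'"
    unfolding G'_def by simp
  moreover have "G' \<subseteq> G"
    unfolding G'_def by blast
  then have "finite G'" "uniform r G'"
    using finite_G uniform_G finite_subset unfolding uniform_def by auto
  ultimately have "has_sunflower G' (petals r)"
    by (intro has_sunflower_of_card_ge)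
  then obtain S Y where S: "sunflower G' S Y" "finite S" "card S = petals r"
    unfolding has_sunflower_def by metis
  have "sunflower G S Y"
    using S(1) \<open>G' \<subseteq> G\<close> by (rule sunflower_mono)
  have "2 \<le> card S"
    using S(3) two_le_petals by simp
  then have "card Y < r"
    using sunflower_core_card_less[OF \<open>sunflower G S Y\<close> uniform_G S(2)] by simp
  then have "rich_core Y"
    unfolding rich_core_def using \<open>sunflower G S Y\<close> S(2,3) petals_mono[of "card Y" r] by auto
  obtain h where "h \<in> S"
    using \<open>2 \<le> card S\<close> by fastforce
  then have "h \<in> G'" "Y \<subseteq> h"
    using S(1) unfolding sunflower_def by auto
  with \<open>rich_core Y\<close> show False
    unfolding G'_def by blast
qed

lemma finite_minimal_rich_cores: "finite (minimal_rich_cores s)"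
proof -
  have "minimal_rich_cores s \<subseteq> Pow V"
    unfolding minimal_rich_cores_def using rich_core_card(3) by blast
  then show ?thesis
    by (rule finite_subset) (simp add: finite_V)
qed

lemma card_minimal_rich_cores:
  assumes "k < s" "s < r"
  shows "card (minimal_rich_cores s) < sunflower_num r (petals r)"
proof (rule ccontr)
  let ?M = "minimal_rich_cores s"
  assume "\<not> card ?M < sunflower_num r (petals r)"
  have "uniform s ?M"
    unfolding uniform_def minimal_rich_cores_def
    using rich_core_card(3) finite_V by (auto intro: finite_subset)
  with finite_minimal_rich_cores[of s] \<open>\<not> card ?M < sunflower_num r (petals r)\<close> have "has_sunflower ?M (petals r)"
    using \<open>s < r\<close> has_sunflower_of_card_ge_uniform_le[of ?M s r "petals r"] by simp
  then obtain T0 Z where T0: "sunflower ?M T0 Z" "finite T0" "card T0 = petals r"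
    unfolding has_sunflower_def by metis
  have "petals (s - 1) \<le> card T0"
    using T0(3) \<open>s < r\<close> petals_mono[of "s - 1" r] by simp
  then obtain T where T: "sunflower ?M T Z" "finite T" "card T = petals (s - 1)"
    using sunflower_obtain_card[OF T0(1,2)] by metis
  have "T \<subseteq> ?M"
    using T(1) unfolding sunflower_def by simp
  have "\<forall>Y\<in>T. \<exists>S. sunflower G S Y \<and> finite S \<and> card T * r \<le> card S"
  proof
    fix Y assume "Y \<in> T"
    then have "rich_core Y" "card Y = s"
      using \<open>T \<subseteq> ?M\<close> unfolding minimal_rich_cores_def by auto
    then show "\<exists>S. sunflower G S Y \<and> finite S \<and> card T * r \<le> card S"
      using T(3) petals_Suc[OF \<open>k < s\<close>] unfolding rich_core_def by metis
  qed
  then obtain S where S: "sunflower G S Z" "finite S" "card S = card T"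
    using sunflower_of_cores[OF uniform_G _ T(1,2)] \<open>s < r\<close> by auto
  obtain Y where "Y \<in> T" "Z \<subset> Y" "finite Y" "card Y = s"
    using sunflower_core_psubset[OF T(1) \<open>uniform s ?M\<close> T(2)] T(3) two_le_petals by metis
  then have "petals (card Z) \<le> card S"
    using S(3) T(3) psubset_card_mono[of Y Z] petals_mono[of "card Z" "s - 1"] by simp
  then have "rich_core Z"
    unfolding rich_core_def using S(1,2) by blast
  moreover have "Y \<in> ?M"
    using \<open>Y \<in> T\<close> T(1) unfolding sunflower_def by blast
  ultimately show False
    using \<open>Z \<subset> Y\<close> unfolding minimal_rich_cores_def by blast
qed

lemma edges_covered:
  "G \<subseteq> {e\<in>G. \<forall>Y\<subseteq>e. \<not> rich_core Y} \<union>
    (\<Union>s\<in>{k<..<r}. \<Union>Y\<in>minimal_rich_cores s. {e\<in>G. Y \<subseteq> e})"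
proof
  fix e assume "e \<in> G"
  show "e \<in> {e\<in>G. \<forall>Y\<subseteq>e. \<not> rich_core Y} \<union>
    (\<Union>s\<in>{k<..<r}. \<Union>Y\<in>minimal_rich_cores s. {e\<in>G. Y \<subseteq> e})"
  proof (cases "\<forall>Y\<subseteq>e. \<not> rich_core Y")
    case True
    with \<open>e \<in> G\<close> show ?thesis
      by simp
  next
    case False
    then obtain Y where "Y \<subseteq> e" "rich_core Y"
      by blast
    moreover have "finite Y"
      using rich_core_card(3)[OF \<open>rich_core Y\<close>] finite_V finite_subset by blast
    ultimately obtain Y' where "Y' \<subseteq> e" "rich_core Y'" "\<And>Z. Z \<subset> Y' \<Longrightarrow> \<not> rich_core Z"
      using exists_minimal_subset[of Y rich_core] by (metis order_trans)
    then have "Y' \<in> minimal_rich_cores (card Y')" "card Y' \<in> {k<..<r}"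
      unfolding minimal_rich_cores_def using rich_core_card by auto
    with \<open>e \<in> G\<close> \<open>Y' \<subseteq> e\<close> show ?thesis
      by blast
  qed
qed

lemma card_edges_containing_rich_core:
  assumes "rich_core Y"
  shows "card {e\<in>G. Y \<subseteq> e} \<le> (card V - k - 1) choose (r - k - 1)"
proof -
  have "k < card Y" "card Y < r" "Y \<subseteq> V"
    using rich_core_card[OF assms] by simp_all
  then have "card Y \<le> card V"
    using finite_V by (simp add: card_mono)
  have "card {e\<in>G. Y \<subseteq> e} \<le> (card V - card Y) choose (r - card Y)"
    using card_edges_containing_le[OF finite_V edges_in_V uniform_G \<open>Y \<subseteq> V\<close>] .
  also have "\<dots> \<le> (card V - card Y + (card Y - k - 1)) choose (r - card Y + (card Y - k - 1))"
    by (rule choose_le_choose_add)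
  also have "\<dots> = (card V - k - 1) choose (r - k - 1)"
    using \<open>k < card Y\<close> \<open>card Y < r\<close> \<open>card Y \<le> card V\<close> by simp
  finally show ?thesis .
qed

lemma card_edges_containing_minimal_rich_cores:
  "card (\<Union>s\<in>{k<..<r}. \<Union>Y\<in>minimal_rich_cores s. {e\<in>G. Y \<subseteq> e})
    \<le> (r - k - 1) * ((sunflower_num r (petals r) - 1) * ((card V - k - 1) choose (r - k - 1)))"
proof -
  define F where "F = sunflower_num r (petals r)"
  define C where "C = (card V - k - 1) choose (r - k - 1)"
  have "card (\<Union>s\<in>{k<..<r}. \<Union>Y\<in>minimal_rich_cores s. {e\<in>G. Y \<subseteq> e})
      \<le> (\<Sum>s\<in>{k<..<r}. card (\<Union>Y\<in>minimal_rich_cores s. {e\<in>G. Y \<subseteq> e}))"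
    by (rule card_UN_le) simp
  also have "\<dots> \<le> (\<Sum>s\<in>{k<..<r}. (F - 1) * C)"
  proof (rule sum_mono)
    fix s assume "s \<in> {k<..<r}"
    have "card (\<Union>Y\<in>minimal_rich_cores s. {e\<in>G. Y \<subseteq> e}) \<le>
        (\<Sum>Y\<in>minimal_rich_cores s. card {e\<in>G. Y \<subseteq> e})"
      using finite_minimal_rich_cores by (rule card_UN_le)
    also have "\<dots> \<le> card (minimal_rich_cores s) * C"
      using sum_bounded_above[of "minimal_rich_cores s" "\<lambda>Y. card {e\<in>G. Y \<subseteq> e}" C]
        card_edges_containing_rich_core unfolding C_def minimal_rich_cores_def by auto
    also have "\<dots> \<le> (F - 1) * C"
      using card_minimal_rich_cores[of s] \<open>s \<in> {k<..<r}\<close> unfolding F_def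
      by (intro mult_le_mono1) simp
    finally show "card (\<Union>Y\<in>minimal_rich_cores s. {e\<in>G. Y \<subseteq> e}) \<le> (F - 1) * C" .
  qed
  finally show ?thesis
    unfolding F_def C_def by simp
qed

theorem card_edges_less:
  assumes "r \<le> card V"
  shows "card G < (r - k) * sunflower_num r (petals r) * ((card V - k - 1) choose (r - k - 1))"
proof -
  define F where "F = sunflower_num r (petals r)"
  define C where "C = (card V - k - 1) choose (r - k - 1)"
  define G' where "G' = {e\<in>G. \<forall>Y\<subseteq>e. \<not> rich_core Y}"
  define W where "W = (\<Union>s\<in>{k<..<r}. \<Union>Y\<in>minimal_rich_cores s. {e\<in>G. Y \<subseteq> e})"
  have "1 \<le> F"
    unfolding F_def using two_le_petals by (intro sunflower_num_pos) (meson le_trans one_le_numeral)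
  have "1 \<le> C"
    unfolding C_def using assms by (simp add: Suc_le_eq)
  have "G' \<union> W \<subseteq> G"
    unfolding G'_def W_def by auto
  then have "finite (G' \<union> W)"
    by (rule finite_subset) (rule finite_G)
  moreover have "G \<subseteq> G' \<union> W"
    using edges_covered unfolding G'_def W_def .
  ultimately have "card G \<le> card (G' \<union> W)"
    by (rule card_mono)
  also have "\<dots> \<le> card G' + card W"
    by (rule card_Un_le)
  also have "\<dots> \<le> (F - 1) * C + (r - k - 1) * ((F - 1) * C)"
  proof (rule add_mono)
    have "card G' \<le> F - 1"
      using card_edges_without_rich_core unfolding G'_def F_def by simp
    also have "\<dots> \<le> (F - 1) * C"
      using \<open>1 \<le> C\<close> by simp
    finally show "card G' \<le> (F - 1) * C" .
    show "card W \<le> (r - k - 1) * ((F - 1) * C)"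
      using card_edges_containing_minimal_rich_cores unfolding W_def F_def C_def .
  qed
  also have "\<dots> = (r - k) * ((F - 1) * C)"
  proof -
    have "r - k = Suc (r - k - 1)"
      using k_less_r by simp
    then show ?thesis
      by (metis mult_Suc)
  qed
  also have "\<dots> < (r - k) * (F * C)"
    using k_less_r \<open>1 \<le> F\<close> \<open>1 \<le> C\<close> by simp
  finally show ?thesis
    unfolding F_def C_def by (simp add: mult.assoc)
qed

end

theorem exists_small_core_sunflower:
  assumes "k < r" "1 \<le> p" "finite V" "\<forall>e\<in>G. e \<subseteq> V" "uniform r G" "r \<le> card V"
    and large: "(r - k) * sunflower_num r (p * r ^ (r - k)) * ((card V - k - 1) choose (r - k - 1))
      \<le> card G"
  shows "\<exists>S Y. sunflower G S Y \<and> finite S \<and> card S = p \<and> card Y \<le> k"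
proof (rule ccontr)
  assume no_sunflower: "\<not> ?thesis"
  show False
  proof (cases "p = 1")
    case True
    have "1 \<le> sunflower_num r (p * r ^ (r - k))"
      using assms(1,2) by (intro sunflower_num_pos) simp
    moreover have "0 < (card V - k - 1) choose (r - k - 1)"
      using assms(6) by simp
    ultimately have "0 < (r - k) * sunflower_num r (p * r ^ (r - k)) * ((card V - k - 1) choose (r - k - 1))"
      using assms(1) by simp
    with large have "0 < card G"
      by linarith
    then obtain e where "e \<in> G"
      by fastforce
    then have "sunflower G {e} {}"
      unfolding sunflower_def by simp
    with True no_sunflower show False
      by fastforce
  next
    case False
    interpret small_core_sunflower_free r k p V G
      using assms False no_sunflower by unfold_locales (auto simp: not_le)
    show False
      using card_edges_less assms(6) large unfolding petals_def by simp
  qed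
qed

theorem lemma10:
  fixes r k p :: nat
  assumes "r \<ge> 3" and "1 \<le> k" and "k \<le> r - 1" and "p \<ge> 1"
  shows "\<exists>n0. \<forall>n \<ge> n0. \<forall>(V :: 'a set) (G :: 'a set set).
     finite V \<and> card V = n \<and> (\<forall>e\<in>G. e \<subseteq> V) \<and> uniform r G \<and>
     card G \<ge> 2 * r ^ (r - k) * sunflower_num r (p * r ^ (r - k)) * ((n - k - 1) choose (r - k - 1))
     \<longrightarrow> (\<exists>S Y. sunflower G S Y \<and> finite S \<and> card S = p \<and> card Y \<le> k)"
proof (intro exI[of _ r] allI impI, elim conjE)
  fix n and V :: "'a set" and G :: "'a set set"
  assume "r \<le> n" "finite V" "card V = n" "\<forall>e\<in>G. e \<subseteq> V" "uniform r G"
    and large: "2 * r ^ (r - k) * sunflower_num r (p * r ^ (r - k)) * ((n - k - 1) choose (r - k - 1))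
      \<le> card G"
  have "r - k < 2 ^ (r - k)"
    by (rule less_exp)
  also have "\<dots> \<le> r ^ (r - k)"
    using \<open>r \<ge> 3\<close> by (intro power_mono) simp_all
  finally have "(r - k) * sunflower_num r (p * r ^ (r - k)) * ((n - k - 1) choose (r - k - 1))
      \<le> 2 * r ^ (r - k) * sunflower_num r (p * r ^ (r - k)) * ((n - k - 1) choose (r - k - 1))"
    by (intro mult_le_mono1) simp
  with large have "(r - k) * sunflower_num r (p * r ^ (r - k)) * ((n - k - 1) choose (r - k - 1)) \<le> card G"
    by (rule le_trans[rotated])
  moreover have "k < r"
    using assms by simp
  ultimately show "\<exists>S Y. sunflower G S Y \<and> finite S \<and> card S = p \<and> card Y \<le> k"
    using exists_small_core_sunflower[of k r p V G] \<open>p \<ge> 1\<close> \<open>finite V\<close> \<open>\<forall>e\<in>G. e \<subseteq> V\<close>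
      \<open>uniform r G\<close> \<open>r \<le> n\<close> \<open>card V = n\<close> by blast
qed

end
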